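(* There exists a family of broadcast protocols $(P_n)_{n}$, $P_n=(Q_n,I_n,M_n,\Delta_n)$, with target sets $F_n\subseteq Q_n$ and $|Q_n|\in O(n)$, such that for every $n$ there exist both a reconfigurable execution and a lossy execution of $P_n$ covering $F_n$, and every reconfigurable or lossy execution of $P_n$ covering $F_n$ has $\Omega(n)$ nodes and length $\Omega(n^2)$.
   Context: A broadcast protocol is a tuple $P=(Q,I,M,\Delta)$ where $Q$ is a finite set of states, $I\subseteq Q$ initial states, $M$ a finite message alphabet and $\Delta\subseteq Q\times\{!!m,\ ??m \mid m\in M\}\times Q$ ($!!m$ = broadcast, $??m$ = reception); protocols are complete for receptions (for every $q$, $m$ there is $q'$ with $(q,??m,q')\in\Delta$). A configuration is a finite undirected graph $\gamma=(V,E,L)$, $E$ symmetric irreflexive, $L:V\to Q$; initial if $L(V)\subseteq I$. A reconfigurable step from $(V,E,L)$ to $(V,E',L')$ ($E'$ arbitrary): some node $v$ and $m$ with $(L(v),!!m,L'(v))\in\Delta$, every neighbour $v'$ of $v$ in $E$ satisfies $(L(v'),??m,L'(v'))\in\Delta$, every other node keeps its label. A lossy step from $(V,E,L)$ to $(V,E,L')$ (edges fixed): some $v$, $m$ with $(L(v),!!m,L'(v))\in\Delta$ and either all other nodes keep their labels (lost broadcast) or as in the reconfigurable step with $E$ (successful broadcast). A reconfigurable (resp. lossy) execution is a sequence $\gamma_0,\dots,\gamma_r$ with $\gamma_0$ initial and consecutive reconfigurable (resp. lossy) steps; its number of nodes is $|V|$, its length is $r$, and it covers $F$ if some node of $\gamma_r$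 has a label in $F$. *)

theory Defs
  imports Complex_Main
begin

datatype 'm action = Bcast 'm | Recv 'm

record ('q, 'm) protocol =
  states :: "'q set"
  init :: "'q set"
  msgs :: "'m set"
  trans :: "('q \<times> 'm action \<times> 'q) set"

definition act_msg :: "'m action \<Rightarrow> 'm" where
  "act_msg a = (case a of Bcast m \<Rightarrow> m | Recv m \<Rightarrow> m)"

definition is_protocol :: "('q, 'm) protocol \<Rightarrow> bool" where
  "is_protocol P \<longleftrightarrow> finite (states P) \<and> init P \<subseteq> states P \<and> finite (msgs P) \<and>
     (\<forall>(q, a, q') \<in> trans P. q \<in> states P \<and> q' \<in> states P \<and> act_msg a \<in> msgs P) \<and>
     (\<forall>q \<in> states P. \<forall>m \<in> msgs P. \<exists>q'. (q, Recv m, q') \<in> trans P)"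

text \<open>Configurations: vertex set V (nodes are naturals), undirected edge set E
(symmetric irreflexive relation on V), labelling L (only its values on V matter).\<close>
type_synonym 'q config = "nat set \<times> (nat \<times> nat) set \<times> (nat \<Rightarrow> 'q)"

definition is_graph :: "nat set \<Rightarrow> (nat \<times> nat) set \<Rightarrow> bool" where
  "is_graph V E \<longleftrightarrow> finite V \<and> E \<subseteq> V \<times> V \<and> sym E \<and> irrefl E"

definition is_config :: "('q, 'm) protocol \<Rightarrow> 'q config \<Rightarrow> bool" where
  "is_config P c = (case c of (V, E, L) \<Rightarrow> is_graph V E \<and> L ` V \<subseteq> states P)"

definition is_initial :: "('q, 'm) protocol \<Rightarrow> 'q config \<Rightarrow> bool" where
  "is_initial P c = (case c of (V, E, L) \<Rightarrow> is_config P c \<and> L ` V \<subseteq> init P)"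

definition bcast_ok :: "('q, 'm) protocol \<Rightarrow> nat set \<Rightarrow> (nat \<times> nat) set \<Rightarrow> (nat \<Rightarrow> 'q)
     \<Rightarrow> (nat \<Rightarrow> 'q) \<Rightarrow> nat \<Rightarrow> 'm \<Rightarrow> bool" where
  "bcast_ok P V E L L' v m \<longleftrightarrow> v \<in> V \<and> (L v, Bcast m, L' v) \<in> trans P \<and>
     (\<forall>w \<in> V. (v, w) \<in> E \<longrightarrow> (L w, Recv m, L' w) \<in> trans P) \<and>
     (\<forall>w \<in> V. w \<noteq> v \<and> (v, w) \<notin> E \<longrightarrow> L' w = L w)"

definition reconf_step :: "('q, 'm) protocol \<Rightarrow> 'q config \<Rightarrow> 'q config \<Rightarrow> bool" where
  "reconf_step P c c' = (case c of (V, E, L) \<Rightarrow> case c' of (V', E', L') \<Rightarrow>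
     V' = V \<and> (\<exists>v m. bcast_ok P V E L L' v m))"

definition lossy_step :: "('q, 'm) protocol \<Rightarrow> 'q config \<Rightarrow> 'q config \<Rightarrow> bool" where
  "lossy_step P c c' = (case c of (V, E, L) \<Rightarrow> case c' of (V', E', L') \<Rightarrow>
     V' = V \<and> E' = E \<and>
     (\<exists>v m. (v \<in> V \<and> (L v, Bcast m, L' v) \<in> trans P \<and> (\<forall>w \<in> V. w \<noteq> v \<longrightarrow> L' w = L w))
            \<or> bcast_ok P V E L L' v m))"

text \<open>An execution gamma_0..gamma_r as a nonempty list of configurations; its length is r.\<close>
definition is_exec :: "('q, 'm) protocol \<Rightarrow> ('q config \<Rightarrow> 'q config \<Rightarrow> bool) \<Rightarrow> 'q config list \<Rightarrow> bool" where
  "is_exec P step cs \<longleftrightarrow> cs \<noteq> [] \<and> is_initial P (hd cs) \<and> (\<forall>c \<in> set cs. is_config P c) \<and>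
     (\<forall>i. Suc i < length cs \<longrightarrow> step (cs ! i) (cs ! Suc i))"

definition reconf_exec :: "('q, 'm) protocol \<Rightarrow> 'q config list \<Rightarrow> bool" where
  "reconf_exec P cs \<longleftrightarrow> is_exec P (reconf_step P) cs"

definition lossy_exec :: "('q, 'm) protocol \<Rightarrow> 'q config list \<Rightarrow> bool" where
  "lossy_exec P cs \<longleftrightarrow> is_exec P (lossy_step P) cs"

definition exec_nodes :: "'q config list \<Rightarrow> nat" where
  "exec_nodes cs = card (fst (hd cs))"

definition exec_length :: "'q config list \<Rightarrow> nat" where
  "exec_length cs = length cs - 1"

definition covers :: "'q config list \<Rightarrow> 'q set \<Rightarrow> bool" where
  "covers cs F = (case last cs of (V, E, L) \<Rightarrow> \<exists>v \<in> V. L v \<in> F)"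

end

theory Submission
  imports Defs
begin

text \<open>In the protocol of size n, a worker node broadcasts the message 0 n times
and then the token 1 once, after which it is finished; a collector node must receive n tokens
to reach the target. Since every worker fires only one token, covering the target needs n
distinct finished workers. Weighting every worker state by its position in the worker chain
gives a potential that grows by exactly one at every step (lost or not), and each finished
worker contributes n + 1 to it, so every covering execution has at least n nodes and at
least n (n + 1) steps. This bound is attained on a clique of n + 1 nodes, where the workers
run one after the other and all receptions succeed.\<close>

definition broadcast_step :: "('q, 'm) protocol \<Rightarrow> nat set \<Rightarrow> (nat \<times> nat) set
    \<Rightarrow> (nat \<Rightarrow> 'q) \<Rightarrow> (nat \<Rightarrow> 'q) \<Rightarrow> bool" where
  "broadcast_step P V E L L' \<longleftrightarrow> (\<exists>v m. bcast_ok P V E L L' v m)"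

text \<open>A broadcast received by an arbitrary subset of the other nodes: this over-approximates
both reconfigurable and lossy steps, independently of the graph.\<close>
definition partial_broadcast_step :: "('q, 'm) protocol \<Rightarrow> nat set
    \<Rightarrow> (nat \<Rightarrow> 'q) \<Rightarrow> (nat \<Rightarrow> 'q) \<Rightarrow> bool" where
  "partial_broadcast_step P V L L' \<longleftrightarrow> (\<exists>v\<in>V. \<exists>m. (L v, Bcast m, L' v) \<in> trans P \<and>
     (\<forall>w\<in>V. w \<noteq> v \<longrightarrow> L' w = L w \<or> (L w, Recv m, L' w) \<in> trans P))"

lemma reconf_step_partial_broadcast_step:
  assumes "reconf_step P (V, E, L) (V', E', L')"
  shows "V' = V \<and> partial_broadcast_step P V L L'"
  using assms unfolding reconf_step_def partial_broadcast_step_def bcast_ok_def by blast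

lemma lossy_step_partial_broadcast_step:
  assumes "lossy_step P (V, E, L) (V', E', L')"
  shows "V' = V \<and> partial_broadcast_step P V L L'"
  using assms unfolding lossy_step_def partial_broadcast_step_def bcast_ok_def by blast

lemma broadcast_step_reconf_step:
  "broadcast_step P V E L L' \<Longrightarrow> reconf_step P (V, E, L) (V, E', L')"
  unfolding broadcast_step_def reconf_step_def by simp

lemma broadcast_step_lossy_step:
  "broadcast_step P V E L L' \<Longrightarrow> lossy_step P (V, E, L) (V, E, L')"
  unfolding broadcast_step_def lossy_step_def by blast

lemma broadcast_step_preserves_config:
  assumes "is_protocol P" "is_config P (V, E, L)" "broadcast_step P V E L L'"
  shows "is_config P (V, E, L')"
proof -
  obtain v m where ok: "bcast_ok P V E L L' v m"
    using assms(3) unfolding broadcast_step_def by blast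
  have "L' w \<in> states P" if "w \<in> V" for w
  proof -
    have "L w \<in> states P" using assms(2) that unfolding is_config_def by auto
    moreover have "(\<exists>a. (L w, a, L' w) \<in> trans P) \<or> L' w = L w"
      using ok that unfolding bcast_ok_def by (cases "w = v"; cases "(v, w) \<in> E") auto
    moreover have "q' \<in> states P" if "(q, a, q') \<in> trans P" for q a q'
      using assms(1) that unfolding is_protocol_def by blast
    ultimately show ?thesis by metis
  qed
  then show ?thesis using assms(2) unfolding is_config_def by auto
qed

lemma is_exec_snoc:
  assumes "is_exec P st cs" "is_config P c" "st (last cs) c"
  shows "is_exec P st (cs @ [c])"
  unfolding is_exec_def
proof (intro conjI allI impI)
  have ne: "cs \<noteq> []" using assms(1) unfolding is_exec_def by simp
  show "is_initial P (hd (cs @ [c]))" using assms(1) ne unfolding is_exec_def by simp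
  show "\<forall>c'\<in>set (cs @ [c]). is_config P c'" using assms(1,2) unfolding is_exec_def by auto
  fix i assume "Suc i < length (cs @ [c])"
  then consider "Suc i < length cs" | "i = length cs - 1" by fastforce
  then show "st ((cs @ [c]) ! i) ((cs @ [c]) ! Suc i)"
  proof cases
    case 1
    then show ?thesis using assms(1) unfolding is_exec_def by (simp add: nth_append)
  next
    case 2
    then show ?thesis using assms(3) ne by (simp add: nth_append last_conv_nth)
  qed
qed simp

lemma broadcast_steps_exec:
  assumes "is_protocol P" "is_initial P (V, E, L\<^sub>0)" "(broadcast_step P V E)\<^sup>*\<^sup>* L\<^sub>0 L"
  shows "\<exists>cs. reconf_exec P cs \<and> lossy_exec P cs \<and> last cs = (V, E, L)"
  using assms(3)
proof (induction rule: rtranclp_induct)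
  case base
  have "is_config P (V, E, L\<^sub>0)" using assms(2) unfolding is_initial_def by simp
  then show ?case
    using assms(2) by (auto simp: reconf_exec_def lossy_exec_def is_exec_def intro!: exI[of _ "[_]"])
next
  case (step L L')
  then obtain cs where cs: "reconf_exec P cs" "lossy_exec P cs" "last cs = (V, E, L)" by blast
  have "is_config P (V, E, L)"
    using cs unfolding reconf_exec_def is_exec_def by (metis last_in_set)
  then have "is_config P (V, E, L')"
    using broadcast_step_preserves_config[OF assms(1)] step.hyps(2) by blast
  then show ?case
    using cs step.hyps(2) broadcast_step_reconf_step broadcast_step_lossy_step
    by (auto simp: reconf_exec_def lossy_exec_def intro!: exI[of _ "cs @ [(V, E, L')]"] is_exec_snoc)
qed

lemma is_exec_relpowp_partial_broadcast_step:
  assumes ex: "is_exec P st cs"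
    and st: "\<And>V E L V' E' L'. st (V, E, L) (V', E', L') \<Longrightarrow> V' = V \<and> partial_broadcast_step P V L L'"
    and hd: "hd cs = (V, E, L)" and last: "last cs = (V', E', L')"
  shows "V' = V \<and> (partial_broadcast_step P V ^^ exec_length cs) L L'"
proof -
  have ne: "cs \<noteq> []" using ex unfolding is_exec_def by simp
  have "fst (cs ! i) = V \<and> (partial_broadcast_step P V ^^ i) L (snd (snd (cs ! i)))"
    if "i < length cs" for i
    using that
  proof (induction i)
    case 0
    then show ?case using hd ne by (simp add: hd_conv_nth)
  next
    case (Suc i)
    obtain W D K where ci: "cs ! i = (W, D, K)" by (cases "cs ! i")
    obtain W' D' K' where ci': "cs ! Suc i = (W', D', K')" by (cases "cs ! Suc i")
    have "st (W, D, K) (W', D', K')" using ex Suc.prems ci ci' unfolding is_exec_def by metis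
    then show ?case using st Suc ci ci' by auto
  qed
  from this[of "length cs - 1"] show ?thesis
    using ne last by (simp add: exec_length_def last_conv_nth)
qed

text \<open>States 0..n form the chain of a worker, which ends in the finished state n + 1 by
firing the token 1; states n + 2 + k (k \<le> n) record a collector that has received k tokens.\<close>
definition token_protocol :: "nat \<Rightarrow> (nat, nat) protocol" where
  "token_protocol n = \<lparr> states = {..2*n+2}, init = {0, n+2}, msgs = {0, 1},
     trans = {(j, Bcast 0, Suc j) | j. j < n} \<union> {(n, Bcast 1, Suc n)}
       \<union> {(q, Recv m, q) | q m. q \<le> 2*n+2 \<and> m \<le> 1}
       \<union> {(q, Recv 1, Suc q) | q. n+2 \<le> q \<and> q < 2*n+2} \<rparr>"

lemma token_protocol_simps [simp]:
  "states (token_protocol n) = {..2*n+2}"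
  "init (token_protocol n) = {0, n+2}"
  "msgs (token_protocol n) = {0, 1}"
  by (simp_all add: token_protocol_def)

lemma token_protocol_Bcast_iff:
  "(q, Bcast m, q') \<in> trans (token_protocol n) \<longleftrightarrow>
     (m = 0 \<and> q < n \<and> q' = Suc q) \<or> (m = 1 \<and> q = n \<and> q' = Suc n)"
  by (auto simp: token_protocol_def)

lemma token_protocol_Recv_iff:
  "(q, Recv m, q') \<in> trans (token_protocol n) \<longleftrightarrow>
     (q \<le> 2*n+2 \<and> m \<le> 1 \<and> q' = q) \<or> (m = 1 \<and> n+2 \<le> q \<and> q < 2*n+2 \<and> q' = Suc q)"
  by (auto simp: token_protocol_def)

lemma is_protocol_token_protocol: "is_protocol (token_protocol n)"
  unfolding is_protocol_def
proof (intro conjI)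
  show "\<forall>(q, a, q') \<in> trans (token_protocol n).
      q \<in> states (token_protocol n) \<and> q' \<in> states (token_protocol n) \<and>
      act_msg a \<in> msgs (token_protocol n)"
    by (auto simp: token_protocol_def act_msg_def)
  show "\<forall>q \<in> states (token_protocol n). \<forall>m \<in> msgs (token_protocol n).
      \<exists>q'. (q, Recv m, q') \<in> trans (token_protocol n)"
    by (auto simp: token_protocol_Recv_iff)
qed simp_all

definition worker_progress :: "nat \<Rightarrow> nat \<Rightarrow> nat" where
  "worker_progress n q = (if q \<le> Suc n then q else 0)"

definition total_progress :: "nat \<Rightarrow> nat set \<Rightarrow> (nat \<Rightarrow> nat) \<Rightarrow> nat" where
  "total_progress n V L = (\<Sum>w\<in>V. worker_progress n (L w))"

definition finished_workers :: "nat \<Rightarrow> nat set \<Rightarrow> (nat \<Rightarrow> nat) \<Rightarrow> nat set" where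
  "finished_workers n V L = {w\<in>V. L w = Suc n}"

text \<open>The token count of a collector in state q is q - (n + 2); by truncated subtraction it
is 0 on worker states, so the invariant says nothing about them.\<close>
definition tokens_bounded :: "nat \<Rightarrow> nat set \<Rightarrow> (nat \<Rightarrow> nat) \<Rightarrow> bool" where
  "tokens_bounded n V L \<longleftrightarrow> (\<forall>w\<in>V. L w - (n+2) \<le> card (finished_workers n V L))"

lemma total_progress_step:
  assumes "finite V" "partial_broadcast_step (token_protocol n) V L L'"
  shows "total_progress n V L' = Suc (total_progress n V L)"
proof -
  obtain v m where v: "v \<in> V" and bc: "(L v, Bcast m, L' v) \<in> trans (token_protocol n)"
    and others: "\<forall>w\<in>V. w \<noteq> v \<longrightarrow> L' w = L w \<or> (L w, Recv m, L' w) \<in> trans (token_protocol n)"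
    using assms(2) unfolding partial_broadcast_step_def by blast
  have "worker_progress n (L' w) = worker_progress n (L w)" if "w \<in> V - {v}" for w
    using others that by (auto simp: token_protocol_Recv_iff worker_progress_def)
  then have rest: "(\<Sum>w\<in>V-{v}. worker_progress n (L' w)) = (\<Sum>w\<in>V-{v}. worker_progress n (L w))"
    by (rule sum.cong[OF refl])
  have "worker_progress n (L' v) = Suc (worker_progress n (L v))"
    using bc by (auto simp: token_protocol_Bcast_iff worker_progress_def)
  with rest show ?thesis
    unfolding total_progress_def
    using sum.remove[OF assms(1) v, of "\<lambda>w. worker_progress n (L' w)"]
      sum.remove[OF assms(1) v, of "\<lambda>w. worker_progress n (L w)"] by simp
qed

lemma tokens_bounded_step:
  assumes "finite V" "partial_broadcast_step (token_protocol n) V L L'" "tokens_bounded n V L"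
  shows "tokens_bounded n V L'"
proof -
  obtain v m where v: "v \<in> V" and bc: "(L v, Bcast m, L' v) \<in> trans (token_protocol n)"
    and others: "\<forall>w\<in>V. w \<noteq> v \<longrightarrow> L' w = L w \<or> (L w, Recv m, L' w) \<in> trans (token_protocol n)"
    using assms(2) unfolding partial_broadcast_step_def by blast
  let ?D = "finished_workers n V L" and ?D' = "finished_workers n V L'"
  have fin: "finite ?D'" using assms(1) by (simp add: finished_workers_def)
  have sub: "?D \<subseteq> ?D'"
    using others bc by (auto simp: finished_workers_def token_protocol_Bcast_iff token_protocol_Recv_iff)
  have more_on_token: "card ?D < card ?D'" if "m = 1"
  proof -
    have "v \<in> ?D' - ?D" using bc v that by (auto simp: finished_workers_def token_protocol_Bcast_iff)
    with sub have "?D \<subset> ?D'" by blast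
    then show ?thesis by (rule psubset_card_mono[OF fin])
  qed
  have "L' w - (n+2) \<le> card ?D'" if w: "w \<in> V" for w
  proof (cases "w = v")
    case True
    then show ?thesis using bc by (auto simp: token_protocol_Bcast_iff)
  next
    case False
    have "L w - (n+2) \<le> card ?D" using assms(3) w unfolding tokens_bounded_def by blast
    moreover have "card ?D \<le> card ?D'" using card_mono[OF fin sub] .
    ultimately show ?thesis
      using others w False more_on_token by (auto simp: token_protocol_Recv_iff)
  qed
  then show ?thesis unfolding tokens_bounded_def by blast
qed

lemma token_protocol_relpowp_invariant:
  assumes "finite V" "L\<^sub>0 ` V \<subseteq> init (token_protocol n)"
  shows "(partial_broadcast_step (token_protocol n) V ^^ k) L\<^sub>0 L \<Longrightarrow>
    total_progress n V L = k \<and> tokens_bounded n V L"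
proof (induction k arbitrary: L)
  case 0
  have "worker_progress n (L w) = 0" if "w \<in> V" for w
    using 0 assms(2) that by (auto simp: worker_progress_def)
  then show ?case
    using 0 assms(2) by (auto simp: total_progress_def tokens_bounded_def)
next
  case (Suc k)
  then obtain K where "(partial_broadcast_step (token_protocol n) V ^^ k) L\<^sub>0 K"
    and "partial_broadcast_step (token_protocol n) V K L" by auto
  with Suc.IH show ?case using total_progress_step tokens_bounded_step assms(1) by metis
qed

lemma token_protocol_cover_bounds:
  assumes "finite V" "L\<^sub>0 ` V \<subseteq> init (token_protocol n)"
    and "(partial_broadcast_step (token_protocol n) V ^^ k) L\<^sub>0 L"
    and "u \<in> V" "L u = 2*n+2"
  shows "n \<le> card V \<and> n * Suc n \<le> k"
proof -
  let ?D = "finished_workers n V L"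
  have k: "total_progress n V L = k" and tok: "tokens_bounded n V L"
    using token_protocol_relpowp_invariant[OF assms(1-3)] by auto
  have "n \<le> card ?D" using tok assms(4,5) unfolding tokens_bounded_def by force
  moreover have "card ?D \<le> card V"
    using assms(1) by (auto simp: finished_workers_def intro: card_mono)
  moreover have "card ?D * Suc n \<le> k"
  proof -
    have "card ?D * Suc n = (\<Sum>w\<in>?D. worker_progress n (L w))"
      by (simp add: finished_workers_def worker_progress_def)
    also have "\<dots> \<le> total_progress n V L"
      unfolding total_progress_def
      by (rule sum_mono2) (use assms(1) in \<open>auto simp: finished_workers_def\<close>)
    finally show ?thesis using k by simp
  qed
  ultimately show ?thesis by (meson le_trans mult_le_mono1)
qed

lemma token_protocol_exec_cover_bounds:
  assumes "reconf_exec (token_protocol n) cs \<or> lossy_exec (token_protocol n) cs"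
    and "covers cs {2*n+2}"
  shows "n \<le> exec_nodes cs \<and> n * Suc n \<le> exec_length cs"
proof -
  obtain V E L\<^sub>0 where hd: "hd cs = (V, E, L\<^sub>0)" by (cases "hd cs")
  obtain V' E' L where last: "last cs = (V', E', L)" by (cases "last cs")
  have steps: "V' = V \<and> (partial_broadcast_step (token_protocol n) V ^^ exec_length cs) L\<^sub>0 L"
    using assms(1) is_exec_relpowp_partial_broadcast_step[OF _ _ hd last]
      reconf_step_partial_broadcast_step lossy_step_partial_broadcast_step
    unfolding reconf_exec_def lossy_exec_def by metis
  have "is_initial (token_protocol n) (V, E, L\<^sub>0)"
    using assms(1) hd unfolding reconf_exec_def lossy_exec_def is_exec_def by metis
  then have "finite V" "L\<^sub>0 ` V \<subseteq> init (token_protocol n)"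
    by (auto simp: is_initial_def is_config_def is_graph_def)
  moreover obtain u where "u \<in> V" "L u = 2*n+2"
    using assms(2) last steps unfolding covers_def by auto
  ultimately show ?thesis
    using token_protocol_cover_bounds steps hd unfolding exec_nodes_def by fastforce
qed

definition complete_edges :: "nat set \<Rightarrow> (nat \<times> nat) set" where
  "complete_edges V = {(a, b). a \<in> V \<and> b \<in> V \<and> a \<noteq> b}"

lemma is_graph_complete_edges: "finite V \<Longrightarrow> is_graph V (complete_edges V)"
  unfolding is_graph_def complete_edges_def sym_def irrefl_def by auto

abbreviation token_clique_step :: "nat \<Rightarrow> (nat \<Rightarrow> nat) \<Rightarrow> (nat \<Rightarrow> nat) \<Rightarrow> bool" where
  "token_clique_step n \<equiv> broadcast_step (token_protocol n) {..n} (complete_edges {..n})"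

definition token_run_labelling :: "nat \<Rightarrow> nat \<Rightarrow> nat \<Rightarrow> nat \<Rightarrow> nat" where
  "token_run_labelling n k j w =
     (if w = 0 then n+2+k else if w \<le> k then Suc n else if w = Suc k then j else 0)"

lemma token_run_count:
  assumes "k < n" "j < n"
  shows "token_clique_step n (token_run_labelling n k j) (token_run_labelling n k (Suc j))"
  unfolding broadcast_step_def bcast_ok_def using assms
  by (intro exI[of _ "Suc k"] exI[of _ 0])
    (auto simp: token_run_labelling_def complete_edges_def
      token_protocol_Bcast_iff token_protocol_Recv_iff)

lemma token_run_fire:
  assumes "k < n"
  shows "token_clique_step n (token_run_labelling n k n) (token_run_labelling n (Suc k) 0)"
  unfolding broadcast_step_def bcast_ok_def using assms
  by (intro exI[of _ "Suc k"] exI[of _ 1])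
    (auto simp: token_run_labelling_def complete_edges_def
      token_protocol_Bcast_iff token_protocol_Recv_iff)

lemma token_run_worker:
  assumes "k < n"
  shows "(token_clique_step n)\<^sup>*\<^sup>* (token_run_labelling n k 0) (token_run_labelling n (Suc k) 0)"
proof -
  have "(token_clique_step n)\<^sup>*\<^sup>* (token_run_labelling n k 0) (token_run_labelling n k j)" if "j \<le> n" for j
    using that
  proof (induction j)
    case (Suc j)
    then show ?case using token_run_count[OF assms, of j] by (simp add: rtranclp.rtrancl_into_rtrancl)
  qed simp
  from this[of n] show ?thesis using token_run_fire[OF assms] by (simp add: rtranclp.rtrancl_into_rtrancl)
qed

lemma token_run:
  "(token_clique_step n)\<^sup>*\<^sup>* (token_run_labelling n 0 0) (token_run_labelling n n 0)"
proof -
  have "(token_clique_step n)\<^sup>*\<^sup>* (token_run_labelling n 0 0) (token_run_labelling n k 0)" if "k \<le> n" for k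
    using that
  proof (induction k)
    case (Suc k)
    then show ?case using token_run_worker[of k n] by (simp add: rtranclp_trans)
  qed simp
  then show ?thesis by simp
qed

lemma token_run_exec:
  "\<exists>cs. reconf_exec (token_protocol n) cs \<and> lossy_exec (token_protocol n) cs \<and>
     covers cs {2*n+2}"
proof -
  have "is_initial (token_protocol n) ({..n}, complete_edges {..n}, token_run_labelling n 0 0)"
    using is_graph_complete_edges[of "{..n}"]
    by (auto simp: is_initial_def is_config_def token_run_labelling_def)
  then obtain cs where "reconf_exec (token_protocol n) cs" "lossy_exec (token_protocol n) cs"
    and "last cs = ({..n}, complete_edges {..n}, token_run_labelling n n 0)"
    using broadcast_steps_exec[OF is_protocol_token_protocol _ token_run] by blast
  then show ?thesis by (auto simp: covers_def token_run_labelling_def)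
qed

theorem theorem3p8:
  "\<exists>(P :: nat \<Rightarrow> (nat, nat) protocol) (F :: nat \<Rightarrow> nat set).
     (\<forall>n. is_protocol (P n) \<and> F n \<subseteq> states (P n)) \<and>
     (\<exists>C::real. \<exists>N. \<forall>n\<ge>N. real (card (states (P n))) \<le> C * real n) \<and>
     (\<forall>n. (\<exists>cs. reconf_exec (P n) cs \<and> covers cs (F n)) \<and>
          (\<exists>cs. lossy_exec (P n) cs \<and> covers cs (F n))) \<and>
     (\<exists>c::real. c > 0 \<and> (\<exists>N. \<forall>n\<ge>N. \<forall>cs.
        (reconf_exec (P n) cs \<or> lossy_exec (P n) cs) \<and> covers cs (F n) \<longrightarrow>
          real (exec_nodes cs) \<ge> c * real n \<and> real (exec_length cs) \<ge> c * (real n)^2))"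
proof (intro exI[of _ token_protocol] exI[of _ "\<lambda>n. {2*n+2}"] conjI allI)
  show "\<exists>C::real. \<exists>N. \<forall>n\<ge>N. real (card (states (token_protocol n))) \<le> C * real n"
    by (intro exI[of _ 5] exI[of _ 1]) auto
  show "\<exists>c::real. c > 0 \<and> (\<exists>N. \<forall>n\<ge>N. \<forall>cs.
      (reconf_exec (token_protocol n) cs \<or> lossy_exec (token_protocol n) cs) \<and> covers cs {2*n+2} \<longrightarrow>
        real (exec_nodes cs) \<ge> c * real n \<and> real (exec_length cs) \<ge> c * (real n)^2)"
  proof (intro exI[of _ 1] exI[of _ 0] conjI allI impI)
    fix n cs
    assume "(reconf_exec (token_protocol n) cs \<or> lossy_exec (token_protocol n) cs) \<and>
      covers cs {2*n+2}"
    then have "n \<le> exec_nodes cs" "n * n \<le> exec_length cs"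
      using token_protocol_exec_cover_bounds[of n cs] le_trans[OF mult_le_mono2[of n "Suc n" n]] by auto
    then show "real (exec_nodes cs) \<ge> 1 * real n" "real (exec_length cs) \<ge> 1 * (real n)^2"
      by (simp_all add: power2_eq_square flip: of_nat_mult)
  qed simp
qed (use is_protocol_token_protocol token_run_exec in auto)

end
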